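(* Let $Q$ be a quantale and $M$ a $Q$-module. (a) $Q$ is precoherent if and only if $Q$ is both algebraic and blooming. (b) If $Q$ is precoherent, then $M$ is precoherent if and only if $M$ is both algebraic and blooming.
   Context: A quantale is a poset $Q$ in which every nonempty subset has a join $\sum$ (no bottom required), with top $1$ and a commutative associative multiplication with unit $1$ distributing over nonempty joins. A $Q$-module is a poset $M$ with all nonempty joins and an associative unital action distributing over nonempty joins in each variable. In a complete semilattice $L$ (all nonempty joins), $c$ is compact if $c\le\sum_{i\in I}x_i$ implies $c\le\sum_{i\in I_0}x_i$ for some finite $I_0\subseteq I$; $K(L)$ is the set of compact elements; $L$ is algebraic if $x=\sum\{c\in K(L):c\le x\}$ for all $x$. $Q$ is precoherent if it is algebraic and $K(Q)$ is closed under multiplication. For precoherent $Q$, $M$ is precoherent if $M$ is algebraic and $cm\in K(M)$ for all $c\in K(Q)$, $m\in K(M)$. Suspension: order nonempty subsets of $L$ by $S\le T$ iff each $s\in S$ is below the join of finitely many elements of $T$; $\Sigma L$ is the poset of equivalence classes; $\sigma_L:\Sigma L\to L$, $S\mapsto\sum S$. $\Sigma Q$ has multiplication $S\cdot T=\{st:s\in S,t\in T\}$ and $\Sigma Q$ acts on $\Sigma M$ by $S\cdot A=\{sa\}$. A left adjoint of $\sigma_L$ is an order-preserving $\sigma_L^\flat:L\to\Sigma L$ with $\sigma_L^\flat(x)\le S\iff x\le\sigma_L(S)$. $Q$ is blooming if $\sigma_Q$ has a left adjoint and $\sigma_Q^\flat(ab)=\sigma_Q^\flat(a)\cdot\sigma_Q^\flat(b)$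 for all $a,b\in Q$. For blooming $Q$, $M$ is blooming if $\sigma_M$ has a left adjoint and $\sigma_M^\flat(qm)=\sigma_Q^\flat(q)\cdot\sigma_M^\flat(m)$ for all $q\in Q$, $m\in M$. *)

theory Defs
  imports Main
begin

definition is_lub :: "'a::order set \<Rightarrow> 'a \<Rightarrow> bool" where
  "is_lub S x \<longleftrightarrow> (\<forall>s\<in>S. s \<le> x) \<and> (\<forall>y. (\<forall>s\<in>S. s \<le> y) \<longrightarrow> x \<le> y)"

definition complete_semilattice :: "'a::order itself \<Rightarrow> bool" where
  "complete_semilattice _ \<longleftrightarrow> (\<forall>S::'a set. S \<noteq> {} \<longrightarrow> (\<exists>x. is_lub S x))"

definition js :: "'a::order set \<Rightarrow> 'a" where
  "js S = (THE x. is_lub S x)"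

definition quantale :: "('a::order \<Rightarrow> 'a \<Rightarrow> 'a) \<Rightarrow> 'a \<Rightarrow> bool" where
  "quantale mult e \<longleftrightarrow>
     complete_semilattice TYPE('a) \<and>
     (\<forall>x. x \<le> e) \<and>
     (\<forall>a b. mult a b = mult b a) \<and>
     (\<forall>a b c. mult (mult a b) c = mult a (mult b c)) \<and>
     (\<forall>a. mult e a = a) \<and>
     (\<forall>a S. S \<noteq> {} \<longrightarrow> mult a (js S) = js (mult a ` S))"

definition qmodule :: "('q::order \<Rightarrow> 'q \<Rightarrow> 'q) \<Rightarrow> 'q \<Rightarrow> ('q \<Rightarrow> 'm::order \<Rightarrow> 'm) \<Rightarrow> bool" where
  "qmodule mult e act \<longleftrightarrow>
     complete_semilattice TYPE('m) \<and>
     (\<forall>a b m. act (mult a b) m = act a (act b m)) \<and>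
     (\<forall>m. act e m = m) \<and>
     (\<forall>S m. S \<noteq> {} \<longrightarrow> act (js S) m = js ((\<lambda>a. act a m) ` S)) \<and>
     (\<forall>a T. T \<noteq> {} \<longrightarrow> act a (js T) = js (act a ` T))"

(* compactness; finite subfamilies must be nonempty since no bottom is assumed *)
definition compact_el :: "'a::order \<Rightarrow> bool" where
  "compact_el c \<longleftrightarrow> (\<forall>S. S \<noteq> {} \<longrightarrow> c \<le> js S \<longrightarrow>
       (\<exists>S0. S0 \<subseteq> S \<and> finite S0 \<and> S0 \<noteq> {} \<and> c \<le> js S0))"

definition algebraic :: "'a::order itself \<Rightarrow> bool" where
  "algebraic _ \<longleftrightarrow> (\<forall>x::'a. is_lub {c. compact_el c \<and> c \<le> x} x)"

definition precoherent_q :: "('a::order \<Rightarrow> 'a \<Rightarrow> 'a) \<Rightarrow> bool" where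
  "precoherent_q mult \<longleftrightarrow> algebraic TYPE('a) \<and>
     (\<forall>a b. compact_el a \<longrightarrow> compact_el b \<longrightarrow> compact_el (mult a b))"

definition precoherent_m :: "('q::order \<Rightarrow> 'm::order \<Rightarrow> 'm) \<Rightarrow> bool" where
  "precoherent_m act \<longleftrightarrow> algebraic TYPE('m) \<and>
     (\<forall>c m. compact_el c \<longrightarrow> compact_el m \<longrightarrow> compact_el (act c m))"

(* Suspension: nonempty subsets with the preorder below; Sigma L is the quotient,
   represented here by representatives, equality of classes = susp_eq. *)
definition susp_le :: "'a::order set \<Rightarrow> 'a set \<Rightarrow> bool" where
  "susp_le S T \<longleftrightarrow> (\<forall>s\<in>S. \<exists>T0. T0 \<subseteq> T \<and> finite T0 \<and> T0 \<noteq> {} \<and> s \<le> js T0)"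

definition susp_eq :: "'a::order set \<Rightarrow> 'a set \<Rightarrow> bool" where
  "susp_eq S T \<longleftrightarrow> susp_le S T \<and> susp_le T S"

(* f is (a representative-level) left adjoint of sigma_L : S \<mapsto> js S *)
definition sigma_left_adjoint :: "('a::order \<Rightarrow> 'a set) \<Rightarrow> bool" where
  "sigma_left_adjoint f \<longleftrightarrow>
     (\<forall>x. f x \<noteq> {}) \<and>
     (\<forall>x y. x \<le> y \<longrightarrow> susp_le (f x) (f y)) \<and>
     (\<forall>x S. S \<noteq> {} \<longrightarrow> (susp_le (f x) S \<longleftrightarrow> x \<le> js S))"

definition set_mult :: "('a \<Rightarrow> 'b \<Rightarrow> 'c) \<Rightarrow> 'a set \<Rightarrow> 'b set \<Rightarrow> 'c set" where
  "set_mult m S T = {m s t | s t. s \<in> S \<and> t \<in> T}"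

definition blooming_q :: "('a::order \<Rightarrow> 'a \<Rightarrow> 'a) \<Rightarrow> bool" where
  "blooming_q mult \<longleftrightarrow> (\<exists>f. sigma_left_adjoint f \<and>
     (\<forall>a b. susp_eq (f (mult a b)) (set_mult mult (f a) (f b))))"

definition blooming_m :: "('q::order \<Rightarrow> 'q \<Rightarrow> 'q) \<Rightarrow> ('q \<Rightarrow> 'm::order \<Rightarrow> 'm) \<Rightarrow> bool" where
  "blooming_m mult act \<longleftrightarrow> blooming_q mult \<and>
     (\<exists>fQ g. sigma_left_adjoint fQ \<and> sigma_left_adjoint g \<and>
        (\<forall>q m. susp_eq (g (act q m)) (set_mult act (fQ q) (g m))))"

end

theory Submission
  imports Defs
begin

(* Both parts are instances of one statement about a map h : A \<times> B \<rightarrow> C of complete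
   semilattices preserving nonempty joins in each variable (the multiplication of Q, or the
   action of Q on M). In an algebraic semilattice x \<mapsto> {c compact. c \<le> x} is a left adjoint
   of the join map \<sigma>, and for these adjoints multiplicativity up to suspension equivalence
   is exactly closure of the compact elements under h. Conversely, for any left adjoint f,
   x is compact iff x lies below the join of some finite set suspension-below f x; a
   multiplicative family of adjoints transports this from x and y to h x y. *)

lemma is_lub_unique: "is_lub S x \<Longrightarrow> is_lub S y \<Longrightarrow> x = y"
  unfolding is_lub_def by (meson order_antisym)

lemma js_eqI: "is_lub S x \<Longrightarrow> js S = x"
  unfolding js_def using is_lub_unique by blast

lemma is_lub_js:
  assumes "complete_semilattice TYPE('a::order)" and "(S::'a set) \<noteq> {}"
  shows "is_lub S (js S)"
proof -
  obtain x where "is_lub S x" using assms unfolding complete_semilattice_def by blast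
  moreover from this have "js S = x" by (rule js_eqI)
  ultimately show ?thesis by simp
qed

lemma js_upper: "complete_semilattice TYPE('a::order) \<Longrightarrow> (s::'a) \<in> S \<Longrightarrow> s \<le> js S"
  using is_lub_js[of S] unfolding is_lub_def by blast

lemma js_least:
  "complete_semilattice TYPE('a::order) \<Longrightarrow> (S::'a set) \<noteq> {} \<Longrightarrow> (\<And>s. s \<in> S \<Longrightarrow> s \<le> y)
    \<Longrightarrow> js S \<le> y"
  using is_lub_js[of S] unfolding is_lub_def by blast

lemma js_singleton [simp]: "js {c} = c"
  by (rule js_eqI) (auto simp: is_lub_def)

lemma js_pair: "x \<le> y \<Longrightarrow> js {x, y} = y"
  by (rule js_eqI) (auto simp: is_lub_def)

lemma js_mono:
  "complete_semilattice TYPE('a::order) \<Longrightarrow> (S::'a set) \<noteq> {} \<Longrightarrow> S \<subseteq> T \<Longrightarrow> js S \<le> js T"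
  by (meson js_least js_upper subsetD)

lemma susp_le_subset: "S \<subseteq> T \<Longrightarrow> susp_le S T"
  unfolding susp_le_def by (intro ballI exI[of _ "{_}"]) auto

lemma susp_le_refl: "susp_le S S"
  by (simp add: susp_le_subset)

lemma susp_le_finite_imp_js_le:
  assumes csl: "complete_semilattice TYPE('a::order)"
    and "finite (X::'a set)" and "X \<noteq> {}" and "susp_le X S"
  shows "\<exists>T. T \<subseteq> S \<and> finite T \<and> T \<noteq> {} \<and> js X \<le> js T"
proof -
  obtain F where F: "\<And>x. x \<in> X \<Longrightarrow> F x \<subseteq> S \<and> finite (F x) \<and> F x \<noteq> {} \<and> x \<le> js (F x)"
    using \<open>susp_le X S\<close> unfolding susp_le_def by metis
  define T where "T = (\<Union>x\<in>X. F x)"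
  have "T \<subseteq> S" "finite T" "T \<noteq> {}"
    using F \<open>finite X\<close> \<open>X \<noteq> {}\<close> unfolding T_def by auto
  moreover have "js X \<le> js T"
  proof (rule js_least[OF csl \<open>X \<noteq> {}\<close>])
    fix x assume "x \<in> X"
    then have "x \<le> js (F x)" and "js (F x) \<le> js T"
      using F js_mono[OF csl, of "F x" T] unfolding T_def by auto
    then show "x \<le> js T" by (rule order_trans)
  qed
  ultimately show ?thesis by blast
qed

lemma susp_le_trans:
  assumes csl: "complete_semilattice TYPE('a::order)"
    and "susp_le (S::'a set) T" and "susp_le T U"
  shows "susp_le S U"
  unfolding susp_le_def
proof
  fix s assume "s \<in> S"
  then obtain T0 where T0: "T0 \<subseteq> T" "finite T0" "T0 \<noteq> {}" "s \<le> js T0"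
    using assms(2) unfolding susp_le_def by blast
  have "susp_le T0 U" using assms(3) T0(1) unfolding susp_le_def by blast
  then obtain U0 where "U0 \<subseteq> U" "finite U0" "U0 \<noteq> {}" "js T0 \<le> js U0"
    using susp_le_finite_imp_js_le[OF csl T0(2,3)] by blast
  then show "\<exists>U0\<subseteq>U. finite U0 \<and> U0 \<noteq> {} \<and> s \<le> js U0"
    using T0(4) order_trans by blast
qed

definition join_preserving :: "('a::order \<Rightarrow> 'b::order) \<Rightarrow> bool" where
  "join_preserving g \<longleftrightarrow> (\<forall>S. S \<noteq> {} \<longrightarrow> g (js S) = js (g ` S))"

definition join_bilinear :: "('a::order \<Rightarrow> 'b::order \<Rightarrow> 'c::order) \<Rightarrow> bool" where
  "join_bilinear h \<longleftrightarrow> (\<forall>b. join_preserving (\<lambda>a. h a b)) \<and> (\<forall>a. join_preserving (h a))"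

lemma join_preserving_mono:
  assumes "complete_semilattice TYPE('b::order)" and "join_preserving (g::'a::order \<Rightarrow> 'b)"
    and "x \<le> y"
  shows "g x \<le> g y"
proof -
  have "g y = g (js {x, y})" using js_pair[OF \<open>x \<le> y\<close>] by simp
  also have "\<dots> = js {g x, g y}"
    using \<open>join_preserving g\<close> unfolding join_preserving_def by (metis empty_not_insert image_insert image_empty)
  finally show ?thesis using js_upper[OF assms(1), of "g x" "{g x, g y}"] by simp
qed

lemma join_bilinear_mono:
  assumes csl: "complete_semilattice TYPE('c::order)"
    and h: "join_bilinear (h::'a::order \<Rightarrow> 'b::order \<Rightarrow> 'c)"
    and "x \<le> x'" and "y \<le> y'"
  shows "h x y \<le> h x' y'"
proof -
  have "h x y \<le> h x' y"
    using join_preserving_mono[OF csl _ \<open>x \<le> x'\<close>, of "\<lambda>a. h a y"] h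
    unfolding join_bilinear_def by blast
  also have "\<dots> \<le> h x' y'"
    using join_preserving_mono[OF csl _ \<open>y \<le> y'\<close>, of "h x'"] h
    unfolding join_bilinear_def by blast
  finally show ?thesis .
qed

lemma set_mult_nonempty: "A \<noteq> {} \<Longrightarrow> B \<noteq> {} \<Longrightarrow> set_mult h A B \<noteq> {}"
  unfolding set_mult_def by blast

lemma finite_set_mult:
  assumes "finite A" and "finite B"
  shows "finite (set_mult h A B)"
proof -
  have "set_mult h A B = case_prod h ` (A \<times> B)" unfolding set_mult_def by auto
  with assms show ?thesis by simp
qed

lemma set_mult_mono: "A \<subseteq> A' \<Longrightarrow> B \<subseteq> B' \<Longrightarrow> set_mult h A B \<subseteq> set_mult h A' B'"
  unfolding set_mult_def by blast

lemma join_bilinear_js_set_mult: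
  assumes csl_a: "complete_semilattice TYPE('a::order)"
    and csl_b: "complete_semilattice TYPE('b::order)"
    and csl_c: "complete_semilattice TYPE('c::order)"
    and h: "join_bilinear (h::'a \<Rightarrow> 'b \<Rightarrow> 'c)"
    and "A \<noteq> {}" and "B \<noteq> {}"
  shows "h (js A) (js B) = js (set_mult h A B)"
proof (rule order_antisym)
  have "h (js A) (js B) = js ((\<lambda>b. h (js A) b) ` B)"
    using h \<open>B \<noteq> {}\<close> unfolding join_bilinear_def join_preserving_def by blast
  also have "\<dots> \<le> js (set_mult h A B)"
  proof (rule js_least[OF csl_c], use \<open>B \<noteq> {}\<close> in simp)
    fix z assume "z \<in> (\<lambda>b. h (js A) b) ` B"
    then obtain b where "b \<in> B" "z = h (js A) b" by blast
    then have "z = js ((\<lambda>a. h a b) ` A)"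
      using h \<open>A \<noteq> {}\<close> unfolding join_bilinear_def join_preserving_def by blast
    also have "\<dots> \<le> js (set_mult h A B)"
      using \<open>A \<noteq> {}\<close> \<open>b \<in> B\<close>
      by (intro js_least[OF csl_c]) (auto intro!: js_upper[OF csl_c] simp: set_mult_def)
    finally show "z \<le> js (set_mult h A B)" .
  qed
  finally show "h (js A) (js B) \<le> js (set_mult h A B)" .
  show "js (set_mult h A B) \<le> h (js A) (js B)"
    using set_mult_nonempty[OF \<open>A \<noteq> {}\<close> \<open>B \<noteq> {}\<close>]
    by (intro js_least[OF csl_c])
      (auto simp: set_mult_def intro!: join_bilinear_mono[OF csl_c h] js_upper[OF csl_a] js_upper[OF csl_b])
qed

lemma join_bilinear_susp_le_set_mult:
  assumes csl_a: "complete_semilattice TYPE('a::order)"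
    and csl_b: "complete_semilattice TYPE('b::order)"
    and csl_c: "complete_semilattice TYPE('c::order)"
    and h: "join_bilinear (h::'a \<Rightarrow> 'b \<Rightarrow> 'c)"
    and "susp_le A A'" and "susp_le B B'"
  shows "susp_le (set_mult h A B) (set_mult h A' B')"
  unfolding susp_le_def
proof
  fix z assume "z \<in> set_mult h A B"
  then obtain a b where "a \<in> A" "b \<in> B" "z = h a b" unfolding set_mult_def by blast
  obtain A0 where A0: "A0 \<subseteq> A'" "finite A0" "A0 \<noteq> {}" "a \<le> js A0"
    using \<open>a \<in> A\<close> \<open>susp_le A A'\<close> unfolding susp_le_def by blast
  obtain B0 where B0: "B0 \<subseteq> B'" "finite B0" "B0 \<noteq> {}" "b \<le> js B0"
    using \<open>b \<in> B\<close> \<open>susp_le B B'\<close> unfolding susp_le_def by blast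
  have "z \<le> h (js A0) (js B0)"
    using \<open>z = h a b\<close> join_bilinear_mono[OF csl_c h A0(4) B0(4)] by simp
  also have "\<dots> = js (set_mult h A0 B0)"
    using join_bilinear_js_set_mult[OF csl_a csl_b csl_c h A0(3) B0(3)] .
  finally show "\<exists>Z0\<subseteq>set_mult h A' B'. finite Z0 \<and> Z0 \<noteq> {} \<and> z \<le> js Z0"
    using set_mult_mono[OF A0(1) B0(1), of h] finite_set_mult[OF A0(2) B0(2), of h]
      set_mult_nonempty[OF A0(3) B0(3), of h] by blast
qed

definition compacts_below :: "'a::order \<Rightarrow> 'a set" where
  "compacts_below x = {c. compact_el c \<and> c \<le> x}"

lemma compact_el_least:
  assumes "\<And>y. x \<le> y"
  shows "compact_el x"
  unfolding compact_el_def
proof (intro allI impI)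
  fix S :: "'a set" assume "S \<noteq> {}"
  then obtain s where "s \<in> S" by blast
  with assms show "\<exists>S0\<subseteq>S. finite S0 \<and> S0 \<noteq> {} \<and> x \<le> js S0"
    by (intro exI[of _ "{s}"]) simp
qed

lemma algebraic_js_compacts_below: "algebraic TYPE('a::order) \<Longrightarrow> js (compacts_below (x::'a)) = x"
  unfolding algebraic_def compacts_below_def by (rule js_eqI) blast

text \<open>Without a bottom element the set of compacts below x could be empty only if x were the
  least element, which is itself compact.\<close>
lemma algebraic_compacts_below_nonempty:
  assumes "algebraic TYPE('a::order)"
  shows "compacts_below (x::'a) \<noteq> {}"
proof
  assume empty: "compacts_below x = {}"
  have "is_lub (compacts_below x) x"
    using assms unfolding algebraic_def compacts_below_def by blast
  then have "x \<in> compacts_below x"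
    using empty compact_el_least unfolding is_lub_def compacts_below_def by auto
  then show False using empty by simp
qed

lemma susp_le_compacts_below:
  assumes "S \<noteq> {}" and "x \<le> js S"
  shows "susp_le (compacts_below x) S"
  unfolding susp_le_def
proof
  fix c assume "c \<in> compacts_below x"
  then have "compact_el c" "c \<le> js S"
    using \<open>x \<le> js S\<close> order_trans unfolding compacts_below_def by auto
  then show "\<exists>T0\<subseteq>S. finite T0 \<and> T0 \<noteq> {} \<and> c \<le> js T0"
    using \<open>S \<noteq> {}\<close> unfolding compact_el_def by blast
qed

lemma algebraic_sigma_left_adjoint:
  assumes csl: "complete_semilattice TYPE('a::order)" and alg: "algebraic TYPE('a)"
  shows "sigma_left_adjoint (compacts_below :: 'a \<Rightarrow> 'a set)"
  unfolding sigma_left_adjoint_def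
proof (intro conjI allI impI)
  fix x :: 'a
  show "compacts_below x \<noteq> {}" using algebraic_compacts_below_nonempty[OF alg] .
next
  fix x y :: 'a assume "x \<le> y"
  then show "susp_le (compacts_below x) (compacts_below y)"
    unfolding compacts_below_def by (auto intro: susp_le_subset)
next
  fix x :: 'a and S :: "'a set" assume "S \<noteq> {}"
  show "susp_le (compacts_below x) S \<longleftrightarrow> x \<le> js S"
  proof
    assume below: "susp_le (compacts_below x) S"
    have "js (compacts_below x) \<le> js S"
    proof (rule js_least[OF csl algebraic_compacts_below_nonempty[OF alg]])
      fix c assume "c \<in> compacts_below x"
      then obtain T0 where "T0 \<subseteq> S" "T0 \<noteq> {}" "c \<le> js T0"
        using below unfolding susp_le_def by blast
      then show "c \<le> js S" using js_mono[OF csl, of T0 S] order_trans by blast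
    qed
    then show "x \<le> js S" using algebraic_js_compacts_below[OF alg] by simp
  next
    assume "x \<le> js S"
    with \<open>S \<noteq> {}\<close> show "susp_le (compacts_below x) S" by (rule susp_le_compacts_below)
  qed
qed

lemma compact_el_iff_sigma_left_adjoint:
  assumes csl: "complete_semilattice TYPE('a::order)" and f: "sigma_left_adjoint (f :: 'a \<Rightarrow> 'a set)"
  shows "compact_el x \<longleftrightarrow> (\<exists>F. finite F \<and> F \<noteq> {} \<and> susp_le F (f x) \<and> x \<le> js F)"
proof
  assume "compact_el x"
  have "f x \<noteq> {}" using f unfolding sigma_left_adjoint_def by blast
  moreover from this have "x \<le> js (f x)"
    using f susp_le_refl unfolding sigma_left_adjoint_def by blast
  ultimately obtain F where "F \<subseteq> f x" "finite F" "F \<noteq> {}" "x \<le> js F"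
    using \<open>compact_el x\<close> unfolding compact_el_def by blast
  then show "\<exists>F. finite F \<and> F \<noteq> {} \<and> susp_le F (f x) \<and> x \<le> js F"
    using susp_le_subset by blast
next
  assume "\<exists>F. finite F \<and> F \<noteq> {} \<and> susp_le F (f x) \<and> x \<le> js F"
  then obtain F where F: "finite F" "F \<noteq> {}" "susp_le F (f x)" "x \<le> js F" by blast
  show "compact_el x"
    unfolding compact_el_def
  proof (intro allI impI)
    fix S assume "S \<noteq> {}" and "x \<le> js S"
    then have "susp_le (f x) S" using f unfolding sigma_left_adjoint_def by blast
    then have "susp_le F S" using susp_le_trans[OF csl F(3)] by blast
    then obtain T where "T \<subseteq> S" "finite T" "T \<noteq> {}" "js F \<le> js T"
      using susp_le_finite_imp_js_le[OF csl F(1,2)] by blast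
    then show "\<exists>S0\<subseteq>S. finite S0 \<and> S0 \<noteq> {} \<and> x \<le> js S0"
      using F(4) order_trans by blast
  qed
qed

lemma compact_el_join_bilinear_if_sigma_left_adjoint_mult:
  assumes csl_a: "complete_semilattice TYPE('a::order)"
    and csl_b: "complete_semilattice TYPE('b::order)"
    and csl_c: "complete_semilattice TYPE('c::order)"
    and h: "join_bilinear (h::'a \<Rightarrow> 'b \<Rightarrow> 'c)"
    and fA: "sigma_left_adjoint fA" and fB: "sigma_left_adjoint fB" and fC: "sigma_left_adjoint fC"
    and mult: "susp_le (set_mult h (fA x) (fB y)) (fC (h x y))"
    and "compact_el x" and "compact_el y"
  shows "compact_el (h x y)"
proof -
  obtain A where A: "finite A" "A \<noteq> {}" "susp_le A (fA x)" "x \<le> js A"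
    using \<open>compact_el x\<close> compact_el_iff_sigma_left_adjoint[OF csl_a fA] by blast
  obtain B where B: "finite B" "B \<noteq> {}" "susp_le B (fB y)" "y \<le> js B"
    using \<open>compact_el y\<close> compact_el_iff_sigma_left_adjoint[OF csl_b fB] by blast
  have "susp_le (set_mult h A B) (fC (h x y))"
    using susp_le_trans[OF csl_c join_bilinear_susp_le_set_mult[OF csl_a csl_b csl_c h A(3) B(3)] mult] .
  moreover have "h x y \<le> js (set_mult h A B)"
    using join_bilinear_mono[OF csl_c h A(4) B(4)] join_bilinear_js_set_mult[OF csl_a csl_b csl_c h A(2) B(2)]
    by simp
  ultimately show ?thesis
    using compact_el_iff_sigma_left_adjoint[OF csl_c fC] finite_set_mult[OF A(1) B(1), of h]
      set_mult_nonempty[OF A(2) B(2), of h] by blast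
qed

lemma compacts_below_join_bilinear_mult:
  assumes csl_a: "complete_semilattice TYPE('a::order)"
    and csl_b: "complete_semilattice TYPE('b::order)"
    and csl_c: "complete_semilattice TYPE('c::order)"
    and h: "join_bilinear (h::'a \<Rightarrow> 'b \<Rightarrow> 'c)"
    and alg_a: "algebraic TYPE('a)" and alg_b: "algebraic TYPE('b)"
    and closed: "\<And>x y. compact_el x \<Longrightarrow> compact_el y \<Longrightarrow> compact_el (h x y)"
  shows "susp_eq (compacts_below (h x y)) (set_mult h (compacts_below x) (compacts_below y))"
  unfolding susp_eq_def
proof
  have "h x y = h (js (compacts_below x)) (js (compacts_below y))"
    using algebraic_js_compacts_below[OF alg_a] algebraic_js_compacts_below[OF alg_b] by simp
  also have "\<dots> = js (set_mult h (compacts_below x) (compacts_below y))"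
    using join_bilinear_js_set_mult[OF csl_a csl_b csl_c h
        algebraic_compacts_below_nonempty[OF alg_a] algebraic_compacts_below_nonempty[OF alg_b]] .
  finally show "susp_le (compacts_below (h x y)) (set_mult h (compacts_below x) (compacts_below y))"
    by (intro susp_le_compacts_below set_mult_nonempty algebraic_compacts_below_nonempty alg_a alg_b) simp
  show "susp_le (set_mult h (compacts_below x) (compacts_below y)) (compacts_below (h x y))"
    using closed join_bilinear_mono[OF csl_c h]
    by (intro susp_le_subset) (auto simp: set_mult_def compacts_below_def)
qed

lemma quantale_join_bilinear:
  assumes "quantale mult e"
  shows "join_bilinear mult"
proof -
  have "\<And>a. join_preserving (mult a)"
    using assms unfolding quantale_def join_preserving_def by blast
  moreover have "(\<lambda>a. mult a b) = mult b" for b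
    using assms unfolding quantale_def by (simp add: fun_eq_iff)
  ultimately show ?thesis unfolding join_bilinear_def by simp
qed

lemma qmodule_join_bilinear: "qmodule mult e act \<Longrightarrow> join_bilinear act"
  unfolding qmodule_def join_bilinear_def join_preserving_def by blast

theorem mainTheorem8:
  fixes mult :: "'q::order \<Rightarrow> 'q \<Rightarrow> 'q" and e :: 'q
    and act :: "'q \<Rightarrow> 'm::order \<Rightarrow> 'm"
  assumes "quantale mult e" and "qmodule mult e act"
  shows "(precoherent_q mult \<longleftrightarrow> algebraic TYPE('q) \<and> blooming_q mult) \<and>
         (precoherent_q mult \<longrightarrow>
            (precoherent_m act \<longleftrightarrow> algebraic TYPE('m) \<and> blooming_m mult act))"
proof -
  have csl_q: "complete_semilattice TYPE('q)" using assms(1) unfolding quantale_def by blast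
  have csl_m: "complete_semilattice TYPE('m)" using assms(2) unfolding qmodule_def by blast
  note mult = quantale_join_bilinear[OF assms(1)] and act = qmodule_join_bilinear[OF assms(2)]
  have part_a: "precoherent_q mult \<longleftrightarrow> algebraic TYPE('q) \<and> blooming_q mult"
    unfolding precoherent_q_def blooming_q_def
    using algebraic_sigma_left_adjoint[OF csl_q] compacts_below_join_bilinear_mult[OF csl_q csl_q csl_q mult]
      compact_el_join_bilinear_if_sigma_left_adjoint_mult[OF csl_q csl_q csl_q mult]
    unfolding susp_eq_def by blast
  moreover have "precoherent_m act \<longleftrightarrow> algebraic TYPE('m) \<and> blooming_m mult act"
    if "precoherent_q mult"
    unfolding precoherent_m_def blooming_m_def
    using that part_a algebraic_sigma_left_adjoint[OF csl_q] algebraic_sigma_left_adjoint[OF csl_m]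
      compacts_below_join_bilinear_mult[OF csl_q csl_m csl_m act]
      compact_el_join_bilinear_if_sigma_left_adjoint_mult[OF csl_q csl_m csl_m act]
    unfolding precoherent_q_def susp_eq_def by blast
  ultimately show ?thesis by blast
qed

end
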